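(* Let $P$ be a polyanalytic polynomial of degree $n$ with only finitely many zeros in $\mathbb{C}$. (i) If $P$ is reducible, say $P=P_1\cdots P_k$ with $k\geq 2$ polyanalytic polynomials $P_j$ of degree $\deg(P_j)=n_j\geq 1$, then $P$ has at most $\sum_{j=1}^k n_j^2$ zeros, and $\sum_{j=1}^k n_j^2<n^2$. (ii) If $n\geq 2$ and $P$ has at least $n^2-2n+3$ zeros, then $P$ is irreducible.
   Context: A polyanalytic polynomial is a function $\mathbb{C}\to\mathbb{C}$ of the form $P(z,\bar z)=\sum_{j+k\le n}\alpha_{j,k} z^j \bar z^{k}$ with complex coefficients (a polynomial in $z$ and $\bar z$); two such polynomials are equal iff all coefficients agree. Its degree is the largest $j+k$ with $\alpha_{j,k}\neq 0$. $P$ is reducible if $P=P_1P_2$ for polyanalytic polynomials with $\deg(P_1),\deg(P_2)\geq 1$, and irreducible otherwise. A zero of $P$ is a point $z\in\mathbb{C}$ with $P(z,\bar z)=0$; zeros are counted as distinct points. *)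

theory Defs
  imports Complex_Main "HOL-Computational_Algebra.Polynomial"
begin

text \<open>A polyanalytic polynomial sum_{j,k} a_{j,k} z^j (cnj z)^k is represented as a
  polynomial in z whose coefficients are polynomials in cnj z:
  coeff (coeff P j) k = a_{j,k}.\<close>

type_synonym polyanalytic = "complex poly poly"

definition pa_eval :: "polyanalytic \<Rightarrow> complex \<Rightarrow> complex" where
  "pa_eval P z = (\<Sum>j\<le>degree P. poly (coeff P j) (cnj z) * z ^ j)"

definition pa_deg :: "polyanalytic \<Rightarrow> nat" where
  "pa_deg P = Max (insert 0 {j + degree (coeff P j) | j. coeff P j \<noteq> 0})"

definition pa_zeros :: "polyanalytic \<Rightarrow> complex set" where
  "pa_zeros P = {z. pa_eval P z = 0}"

definition pa_reducible :: "polyanalytic \<Rightarrow> bool" where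
  "pa_reducible P \<longleftrightarrow> (\<exists>P1 P2. P = P1 * P2 \<and> pa_deg P1 \<ge> 1 \<and> pa_deg P2 \<ge> 1)"

definition pa_irreducible :: "polyanalytic \<Rightarrow> bool" where
  "pa_irreducible P \<longleftrightarrow> \<not> pa_reducible P"

end

theory Submission
  imports Defs "Subresultants.Subresultant_Gcd" "HOL-Analysis.Analysis"
    "HOL-Computational_Algebra.Field_as_Ring"
begin

text \<open>View \<open>P\<close> as a polynomial in \<open>x = cnj z\<close> and \<open>y = z\<close>. After a generic shear
  \<open>(x, y) \<mapsto> (x + c y, y)\<close> the leading coefficient in \<open>y\<close> is a nonzero constant; this
  makes the total degree additive and, through the resultant in \<open>y\<close>, gives a Bezout bound:
  coprime \<open>F\<close>, \<open>G\<close> have at most \<open>deg F \<cdot> deg G\<close> common zeros. For a prime \<open>P\<close> we apply it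
  at the points \<open>(cnj z, z)\<close> to \<open>P\<close> and a polynomial \<open>G\<close> coprime to \<open>P\<close>, of degree at most
  \<open>deg P\<close> and vanishing at the zeros of \<open>P\<close>, so \<open>P\<close> has at most \<open>(deg P)\<^sup>2\<close> zeros;
  induction over factorisations extends this to every \<open>P\<close> with finitely many zeros. A product \<open>P\<^sub>1 \<cdots> P\<^sub>k\<close> then has at
  most \<open>\<Sum> n\<^sub>j\<^sup>2 < (\<Sum> n\<^sub>j)\<^sup>2\<close> zeros, and for two factors this is at most \<open>n\<^sup>2 - 2n + 2\<close>.\<close>

definition poly2 :: "'a::comm_semiring_1 poly poly \<Rightarrow> 'a \<Rightarrow> 'a \<Rightarrow> 'a" where
  "poly2 H x y = poly (map_poly (\<lambda>q. poly q x) H) y"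

lemma poly2_0 [simp]: "poly2 0 x y = 0"
  by (simp add: poly2_def)

lemma poly2_1 [simp]: "poly2 1 x y = 1"
  by (simp add: poly2_def)

lemma poly2_pCons: "poly2 (pCons a H) x y = poly a x + y * poly2 H x y"
  by (simp add: poly2_def Polynomial.map_poly_pCons)

lemma poly2_const [simp]: "poly2 [:[:a:]:] x y = a"
  by (simp add: poly2_pCons)

lemma poly2_monom_monom: "poly2 (monom (monom a j) k) x y = a * x ^ j * y ^ k"
  by (simp add: poly2_def map_poly_monom poly_monom)

lemma poly2_add [simp]: "poly2 (A + B) x y = poly2 A x y + poly2 B x y"
  by (simp add: poly2_def map_poly_add)

lemma poly2_mult [simp]:
  fixes A B :: "'a::comm_ring_1 poly poly"
  shows "poly2 (A * B) x y = poly2 A x y * poly2 B x y"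
proof -
  interpret map_poly_comm_ring_hom "\<lambda>q::'a poly. poly q x" ..
  show ?thesis by (simp add: poly2_def hom_mult)
qed

lemma poly2_diff [simp]:
  fixes A B :: "'a::comm_ring_1 poly poly"
  shows "poly2 (A - B) x y = poly2 A x y - poly2 B x y"
proof -
  interpret map_poly_comm_ring_hom "\<lambda>q::'a poly. poly q x" ..
  show ?thesis by (simp add: poly2_def hom_minus)
qed

lemma poly2_sum: "poly2 (sum f S) x y = (\<Sum>i\<in>S. poly2 (f i) x y)"
  by (induction S rule: infinite_finite_induct) auto

lemma poly_altdef_degree_le:
  fixes p :: "'a::comm_semiring_1 poly"
  assumes "degree p \<le> N"
  shows "poly p x = (\<Sum>i\<le>N. coeff p i * x ^ i)"
proof -
  have "poly p x = (\<Sum>i\<le>degree p. coeff p i * x ^ i)" by (rule poly_altdef)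
  also have "\<dots> = (\<Sum>i\<le>N. coeff p i * x ^ i)"
    by (rule sum.mono_neutral_left) (use assms in \<open>auto intro: le_degree\<close>)
  finally show ?thesis .
qed

lemma poly2_altdef:
  assumes "degree H \<le> N"
  shows "poly2 H x y = (\<Sum>j\<le>N. poly (coeff H j) x * y ^ j)"
proof -
  have "degree (map_poly (\<lambda>q. poly q x) H) \<le> N"
    using degree_map_poly_le[of "\<lambda>q. poly q x" H] assms by linarith
  then show ?thesis
    unfolding poly2_def by (subst poly_altdef_degree_le) (auto simp: coeff_map_poly)
qed

lemma poly2_eqI:
  fixes A B :: "'a::{idom, ring_char_0} poly poly"
  assumes "\<And>x y. poly2 A x y = poly2 B x y"
  shows "A = B"
proof -
  have "map_poly (\<lambda>q. poly q x) (A - B) = 0" for x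
    using assms[of x] poly2_diff[of A B x] unfolding poly2_def
    by (metis poly_all_0_iff_0 right_minus_eq)
  then have "poly (coeff (A - B) j) x = 0" for j x
    using coeff_map_poly[of "\<lambda>q. poly q x" "A - B" j] by simp
  then have "coeff (A - B) j = 0" for j
    using poly_all_0_iff_0 by blast
  then show ?thesis by (metis poly_eqI coeff_0 right_minus_eq)
qed

lemma pa_eval_poly2: "pa_eval P z = poly2 P (cnj z) z"
  unfolding pa_eval_def by (subst poly2_altdef[OF order.refl]) (simp add: mult.commute)

lemma pa_eval_mult: "pa_eval (A * B) z = pa_eval A z * pa_eval B z"
  by (simp add: pa_eval_poly2)

lemma pa_zeros_mult: "pa_zeros (A * B) = pa_zeros A \<union> pa_zeros B"
  by (auto simp: pa_zeros_def pa_eval_mult)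

lemma pa_zeros_0: "pa_zeros 0 = UNIV"
  by (simp add: pa_zeros_def pa_eval_poly2)

lemma nonzero_if_finite_pa_zeros: "finite (pa_zeros P) \<Longrightarrow> P \<noteq> 0"
  using infinite_UNIV_char_0 by (auto simp: pa_zeros_0)

section \<open>Total degree\<close>

lemma finite_pa_deg_set: "finite {j + degree (coeff P j) | j. coeff P j \<noteq> 0}"
proof -
  have "{j + degree (coeff P j) | j. coeff P j \<noteq> 0} \<subseteq> (\<lambda>j. j + degree (coeff P j)) ` {..degree P}"
    using le_degree by fastforce
  then show ?thesis using finite_surj by blast
qed

lemma pa_deg_le_iff: "pa_deg P \<le> d \<longleftrightarrow> (\<forall>j. coeff P j \<noteq> 0 \<longrightarrow> j + degree (coeff P j) \<le> d)"
  unfolding pa_deg_def using finite_pa_deg_set[of P] by (auto simp: Max_le_iff)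

lemma pa_deg_leI: "(\<And>j. coeff P j \<noteq> 0 \<Longrightarrow> j + degree (coeff P j) \<le> d) \<Longrightarrow> pa_deg P \<le> d"
  using pa_deg_le_iff by blast

lemma le_pa_deg: "coeff P j \<noteq> 0 \<Longrightarrow> j + degree (coeff P j) \<le> pa_deg P"
  using pa_deg_le_iff by blast

lemma degree_le_pa_deg: "degree P \<le> pa_deg P"
  using le_pa_deg[of P "degree P"] by (cases "P = 0") auto

lemma pa_deg_attained:
  assumes "P \<noteq> 0"
  obtains j where "coeff P j \<noteq> 0" "j + degree (coeff P j) = pa_deg P"
proof -
  have "pa_deg P \<in> insert 0 {j + degree (coeff P j) | j. coeff P j \<noteq> 0}"
    unfolding pa_deg_def using finite_pa_deg_set[of P] by (intro Max_in) auto
  then show ?thesis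
  proof
    assume deg: "pa_deg P = 0"
    have "coeff P (degree P) \<noteq> 0" using assms by simp
    with le_pa_deg[OF this] deg show ?thesis by (intro that) auto
  qed (use that in auto)
qed

lemma pa_deg_0 [simp]: "pa_deg 0 = 0"
  using pa_deg_le_iff[of 0 0] by simp

lemma pa_deg_const [simp]: "pa_deg [:[:a:]:] = 0"
  using pa_deg_le_iff[of "[:[:a:]:]" 0] by (auto simp: coeff_pCons split: nat.splits)

lemma pa_deg_1 [simp]: "pa_deg 1 = 0"
  using pa_deg_const[of 1] by (simp only: pCons_one)

lemma pa_deg_eq_0_iff: "pa_deg P = 0 \<longleftrightarrow> (\<exists>a. P = [:[:a:]:])"
proof
  assume deg: "pa_deg P = 0"
  then have "P = [:coeff P 0:]"
    using degree_le_pa_deg[of P] by (metis degree_0_id le_zero_eq)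
  moreover have "degree (coeff P 0) = 0"
    using le_pa_deg[of P 0] deg by (cases "coeff P 0 = 0") auto
  then have "coeff P 0 = [:coeff (coeff P 0) 0:]" by (metis degree_0_id)
  ultimately show "\<exists>a. P = [:[:a:]:]" by metis
qed auto

lemma is_unit_iff_pa_deg_eq_0:
  assumes "P \<noteq> 0"
  shows "is_unit P \<longleftrightarrow> pa_deg P = 0"
proof
  assume "is_unit P"
  then obtain c where c: "P = [:c:]" "is_unit c" by (auto simp: is_unit_poly_iff)
  then have "degree c = 0" by (simp add: is_unit_iff_degree)
  then show "pa_deg P = 0" using c(1) by (metis degree_0_id pa_deg_const)
next
  assume "pa_deg P = 0"
  with assms show "is_unit P" by (auto simp: pa_deg_eq_0_iff is_unit_const_poly_iff)
qed

lemma pa_deg_add_le: "pa_deg (A + B) \<le> max (pa_deg A) (pa_deg B)"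
proof (rule pa_deg_leI)
  fix j assume nz: "coeff (A + B) j \<noteq> 0"
  show "j + degree (coeff (A + B) j) \<le> max (pa_deg A) (pa_deg B)"
  proof (cases "coeff A j = 0 \<or> coeff B j = 0")
    case True
    with nz le_pa_deg[of A j] le_pa_deg[of B j] show ?thesis by auto
  next
    case False
    have "degree (coeff (A + B) j) \<le> max (degree (coeff A j)) (degree (coeff B j))"
      by (simp add: degree_add_le_max)
    with False le_pa_deg[of A j] le_pa_deg[of B j] show ?thesis by linarith
  qed
qed

lemma pa_deg_sum_le:
  "(\<And>i. i \<in> S \<Longrightarrow> pa_deg (f i) \<le> d) \<Longrightarrow> pa_deg (sum f S) \<le> d"
proof (induction S rule: infinite_finite_induct)
  case (insert x F)
  have "pa_deg (f x + sum f F) \<le> max (pa_deg (f x)) (pa_deg (sum f F))"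
    by (rule pa_deg_add_le)
  also have "\<dots> \<le> d" using insert by simp
  finally show ?case using insert.hyps by simp
qed auto

lemma pa_deg_mult_le: "pa_deg (A * B) \<le> pa_deg A + pa_deg B"
proof (rule pa_deg_leI)
  fix k assume nz: "coeff (A * B) k \<noteq> 0"
  let ?d = "pa_deg A + pa_deg B"
  have term_le: "k + degree (coeff A i * coeff B (k - i)) \<le> ?d"
    if "i \<le> k" "coeff A i * coeff B (k - i) \<noteq> 0" for i
  proof -
    from that(2) have "coeff A i \<noteq> 0" "coeff B (k - i) \<noteq> 0" by auto
    from le_pa_deg[OF this(1)] le_pa_deg[OF this(2)] that(1)
      degree_mult_le[of "coeff A i" "coeff B (k - i)"]
    show ?thesis by linarith
  qed
  have ck: "coeff (A * B) k = (\<Sum>i\<le>k. coeff A i * coeff B (k - i))"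
    by (rule coeff_mult)
  then obtain i where "i \<le> k" "coeff A i * coeff B (k - i) \<noteq> 0"
    using nz by (metis (no_types, lifting) atMost_iff sum.neutral)
  from term_le[OF this] have k: "k \<le> ?d" by linarith
  have "degree (coeff (A * B) k) \<le> ?d - k"
    unfolding ck
  proof (rule degree_sum_le)
    fix i assume "i \<in> {..k}"
    then show "degree (coeff A i * coeff B (k - i)) \<le> ?d - k"
      using term_le[of i] k by (cases "coeff A i * coeff B (k - i) = 0") (auto simp: le_diff_conv2)
  qed simp
  with k show "k + degree (coeff (A * B) k) \<le> ?d" by linarith
qed

lemma pa_deg_power_le: "pa_deg (A ^ k) \<le> k * pa_deg A"
proof (induction k)
  case (Suc k)
  then show ?case using pa_deg_mult_le[of A "A ^ k"] by simp
qed simp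

lemma pa_deg_monom_monom_le: "pa_deg (monom (monom a j) k) \<le> j + k"
proof (rule pa_deg_leI)
  fix i assume "coeff (monom (monom a j) k) i \<noteq> 0"
  then have "i = k" by (auto split: if_splits)
  then show "i + degree (coeff (monom (monom a j) k) i) \<le> j + k"
    using degree_monom_le[of a j] by simp
qed

section \<open>Shearing\<close>

text \<open>The shear does not increase the total degree \<open>m\<close> and moves the homogeneous part of
  degree \<open>m\<close> into the coefficient of \<open>y\<^sup>m\<close>.\<close>

text \<open>\<open>[:[:0, 1:], [:c:]:]\<close> is \<open>x + c y\<close> and \<open>[:0, 1:]\<close> is \<open>y\<close>.\<close>

definition shear_inner :: "'a::comm_ring_1 \<Rightarrow> 'a poly \<Rightarrow> 'a poly poly" where
  "shear_inner c q = poly (map_poly (\<lambda>a. [:[:a:]:]) q) [:[:0, 1:], [:c:]:]"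

definition shear :: "'a::comm_ring_1 \<Rightarrow> 'a poly poly \<Rightarrow> 'a poly poly" where
  "shear c F = poly (map_poly (shear_inner c) F) [:0, 1:]"

lemma comm_ring_hom_shear_inner: "comm_ring_hom (shear_inner c)"
proof -
  interpret const: map_poly_comm_ring_hom "\<lambda>a::'a. [:[:a:]:]"
    by unfold_locales (auto simp: pCons_one)
  show ?thesis
    by unfold_locales (auto simp: shear_inner_def const.hom_mult const.hom_add)
qed

lemma comm_ring_hom_shear: "comm_ring_hom (shear c)"
proof -
  interpret map_poly_comm_ring_hom "shear_inner c"
    unfolding map_poly_comm_ring_hom_def by (rule comm_ring_hom_shear_inner)
  show ?thesis
    by unfold_locales (auto simp: shear_def hom_mult hom_add)
qed

lemma shear_inner_0 [simp]: "shear_inner c 0 = 0"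
  by (simp add: shear_inner_def)

lemma poly2_shear_inner: "poly2 (shear_inner c q) x y = poly q (x + c * y)"
proof (induction q)
  case (pCons a q)
  have eq: "shear_inner c (pCons a q) = [:[:a:]:] + [:[:0, 1:], [:c:]:] * shear_inner c q"
    by (simp add: shear_inner_def Polynomial.map_poly_pCons)
  have lin: "poly2 [:[:0, 1:], [:c:]:] x y = x + c * y"
    by (simp add: poly2_pCons)
  show ?case
    unfolding eq poly2_add poly2_mult poly2_const lin pCons.IH by simp
qed simp

lemma poly2_shear: "poly2 (shear c F) x y = poly2 F (x + c * y) y"
  by (induction F) (auto simp: shear_def Polynomial.map_poly_pCons poly2_pCons poly2_shear_inner)

lemma shear_shear_neg [simp]:
  fixes F :: "'a::{idom, ring_char_0} poly poly"
  shows "shear (- c) (shear c F) = F"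
  by (rule poly2_eqI) (simp add: poly2_shear algebra_simps)

lemma coprime_shear:
  fixes F G :: "'a::field_char_0 poly poly"
  assumes "coprime F G"
  shows "coprime (shear c F) (shear c G)"
proof (rule coprimeI)
  interpret inv: comm_ring_hom "shear (- c)" by (rule comm_ring_hom_shear)
  interpret fwd: comm_ring_hom "shear c" by (rule comm_ring_hom_shear)
  fix d assume "d dvd shear c F" "d dvd shear c G"
  then have "shear (- c) d dvd F" "shear (- c) d dvd G"
    using inv.hom_dvd by (metis shear_shear_neg)+
  with assms have "is_unit (shear (- c) d)" by (rule coprime_common_divisor)
  then have "is_unit (shear c (shear (- c) d))" by (rule fwd.hom_dvd_1)
  then show "is_unit d" using shear_shear_neg[of "- c" d] by simp
qed

lemma shear_inner_altdef: "shear_inner c q = (\<Sum>i\<le>degree q. [:[:0, 1:], [:c:]:] ^ i * [:[:coeff q i:]:])"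
  unfolding shear_inner_def using eval_poly_as_sum[of "\<lambda>a. [:[:a:]:]" q] by (simp add: eval_poly_def)

lemma shear_altdef:
  assumes "degree F \<le> N"
  shows "shear c F = (\<Sum>j\<le>N. [:0, 1:] ^ j * shear_inner c (coeff F j))"
proof -
  have "degree (map_poly (shear_inner c) F) \<le> N"
    using degree_map_poly_le[of "shear_inner c" F] assms by linarith
  then show ?thesis
    unfolding shear_def by (subst poly_altdef_degree_le) (auto simp: coeff_map_poly mult.commute)
qed

lemma pa_deg_shear_inner_le: "pa_deg (shear_inner c q) \<le> degree q"
  unfolding shear_inner_altdef
proof (rule pa_deg_sum_le)
  fix i assume i: "i \<in> {..degree q}"
  have "pa_deg ([:[:0, 1:], [:c:]:] ^ i * [:[:coeff q i:]:]) \<le> pa_deg ([:[:0, 1:], [:c:]:] ^ i)"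
    using pa_deg_mult_le[of "[:[:0, 1:], [:c:]:] ^ i" "[:[:coeff q i:]:]"] by simp
  also have "\<dots> \<le> i * pa_deg [:[:0, 1:], [:c:]:]"
    by (rule pa_deg_power_le)
  also have "\<dots> \<le> i * 1"
    by (intro mult_le_mono2 pa_deg_leI) (auto simp: coeff_pCons split: nat.splits)
  finally show "pa_deg ([:[:0, 1:], [:c:]:] ^ i * [:[:coeff q i:]:]) \<le> degree q"
    using i by simp
qed

lemma pa_deg_shear_le: "pa_deg (shear c F) \<le> pa_deg F"
  unfolding shear_altdef[OF order.refl]
proof (rule pa_deg_sum_le)
  fix j assume "j \<in> {..degree F}"
  show "pa_deg ([:0, 1:] ^ j * shear_inner c (coeff F j)) \<le> pa_deg F"
  proof (cases "coeff F j = 0")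
    case False
    have "pa_deg ([:0, 1:] ^ j) \<le> j * pa_deg [:0, 1:]"
      by (rule pa_deg_power_le)
    also have "\<dots> \<le> j * 1"
      by (intro mult_le_mono2 pa_deg_leI) (auto simp: coeff_pCons split: nat.splits)
    finally have "pa_deg ([:0, 1:] ^ j) \<le> j" by simp
    then show ?thesis
      using pa_deg_mult_le[of "[:0, 1:] ^ j" "shear_inner c (coeff F j)"]
        pa_deg_shear_inner_le[of c "coeff F j"] le_pa_deg[OF False] by linarith
  qed simp
qed

lemma coeff_linear_mult:
  "coeff ([:[:0, 1:], [:c:]:] * H) k = [:0, 1:] * coeff H k + (if k = 0 then 0 else [:c:] * coeff H (k - 1))"
  by (auto simp: coeff_pCons split: nat.splits)

lemma coeff_linear_power:
  "i \<le> d \<Longrightarrow> coeff ([:[:0, 1:], [:c:]:] ^ i) d = (if i = d then [:c ^ d:] else 0)"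
proof (induction i arbitrary: d)
  case 0
  then show ?case by (auto simp: pCons_one coeff_pCons split: nat.splits)
next
  case (Suc i)
  then obtain d' where d: "d = Suc d'" "i \<le> d'" by (cases d) auto
  then show ?case
    using Suc.IH[of "Suc d'"] Suc.IH[of d'] by (auto simp: coeff_linear_mult)
qed

lemma coeff_shear_inner_top:
  assumes "degree q \<le> d"
  shows "coeff (shear_inner c q) d = [:coeff q d * c ^ d:]"
proof -
  have "coeff (shear_inner c q) d
      = (\<Sum>i\<le>degree q. Polynomial.smult (coeff q i) (coeff ([:[:0, 1:], [:c:]:] ^ i) d))"
    unfolding shear_inner_altdef coeff_sum by simp
  also have "\<dots> = (\<Sum>i\<le>degree q. if i = d then [:coeff q d * c ^ d:] else 0)"
    by (rule sum.cong) (use assms coeff_linear_power[of _ d c] in auto)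
  also have "\<dots> = [:coeff q d * c ^ d:]"
    using assms by (auto simp: coeff_eq_0)
  finally show ?thesis .
qed

text \<open>\<open>top_form m F\<close> is the homogeneous part of degree \<open>m\<close> of \<open>F\<close>, dehomogenised by \<open>y = 1\<close>.\<close>

definition top_form :: "nat \<Rightarrow> 'a::comm_semiring_1 poly poly \<Rightarrow> 'a poly" where
  "top_form m F = (\<Sum>j\<le>m. monom (coeff (coeff F j) (m - j)) (m - j))"

lemma coeff_shear_top:
  fixes F :: "complex poly poly"
  assumes "pa_deg F \<le> m"
  shows "coeff (shear c F) m = [:poly (top_form m F) c:]"
proof -
  have "degree F \<le> m" using degree_le_pa_deg[of F] assms by linarith
  then have "coeff (shear c F) m = (\<Sum>j\<le>m. coeff ([:0, 1:] ^ j * shear_inner c (coeff F j)) m)"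
    by (simp add: shear_altdef coeff_sum)
  also have "\<dots> = (\<Sum>j\<le>m. [:coeff (coeff F j) (m - j) * c ^ (m - j):])"
  proof (rule sum.cong)
    fix j assume "j \<in> {..m}"
    moreover have "degree (coeff F j) \<le> m - j"
      using le_pa_deg[of F j] assms by (cases "coeff F j = 0") auto
    moreover have "[:0, 1:] ^ j = (monom 1 j :: complex poly poly)"
      by (simp add: monom_altdef)
    ultimately show "coeff ([:0, 1:] ^ j * shear_inner c (coeff F j)) m
        = [:coeff (coeff F j) (m - j) * c ^ (m - j):]"
      by (simp add: coeff_monom_mult coeff_shear_inner_top)
  qed simp
  also have "\<dots> = [:poly (top_form m F) c:]"
    by (simp add: top_form_def poly_sum poly_monom sum_to_poly)
  finally show ?thesis .
qed

lemma top_form_nonzero: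
  assumes "F \<noteq> 0"
  shows "top_form (pa_deg F) F \<noteq> 0"
proof -
  let ?m = "pa_deg F"
  obtain j0 where j0: "coeff F j0 \<noteq> 0" "j0 + degree (coeff F j0) = ?m"
    using pa_deg_attained[OF assms] .
  then have top: "?m - j0 = degree (coeff F j0)" by simp
  have "coeff (top_form ?m F) (?m - j0) = (\<Sum>j\<le>?m. if j = j0 then lead_coeff (coeff F j0) else 0)"
    unfolding top_form_def coeff_sum coeff_monom by (rule sum.cong) (use j0 top in auto)
  also have "\<dots> = lead_coeff (coeff F j0)"
    using j0(2) by simp
  finally show ?thesis using j0(1) by auto
qed

lemma shear_generic:
  assumes "poly (top_form (pa_deg F) F) c \<noteq> 0"
  shows "degree (shear c F) = pa_deg F" "coeff (shear c F) (pa_deg F) = [:poly (top_form (pa_deg F) F) c:]"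
proof -
  show lc: "coeff (shear c F) (pa_deg F) = [:poly (top_form (pa_deg F) F) c:]"
    by (rule coeff_shear_top) simp
  have "degree (shear c F) \<le> pa_deg F"
    using degree_le_pa_deg[of "shear c F"] pa_deg_shear_le[of c F] by linarith
  moreover have "pa_deg F \<le> degree (shear c F)"
    using lc assms by (intro le_degree) simp
  ultimately show "degree (shear c F) = pa_deg F" by simp
qed

lemma avoid_finite_and_roots:
  fixes p q :: "'a::{idom, ring_char_0} poly"
  assumes "finite B" "p \<noteq> 0" "q \<noteq> 0"
  obtains c where "c \<notin> B" "poly p c \<noteq> 0" "poly q c \<noteq> 0"
proof -
  have "finite (B \<union> {x. poly p x = 0} \<union> {x. poly q x = 0})"
    using assms poly_roots_finite by auto
  from ex_new_if_finite[OF infinite_UNIV_char_0 this] that show ?thesis by auto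
qed

lemma pa_deg_mult:
  assumes "A \<noteq> 0" "B \<noteq> 0"
  shows "pa_deg (A * B) = pa_deg A + pa_deg B"
proof -
  interpret comm_ring_hom "shear c" for c by (rule comm_ring_hom_shear)
  obtain c where c: "poly (top_form (pa_deg A) A) c \<noteq> 0" "poly (top_form (pa_deg B) B) c \<noteq> 0"
    using avoid_finite_and_roots[of "{}"] top_form_nonzero assms by (metis finite.emptyI)
  have "shear c A \<noteq> 0" "shear c B \<noteq> 0"
    using shear_generic(2)[OF c(1)] shear_generic(2)[OF c(2)] c by auto
  then have "degree (shear c (A * B)) = pa_deg A + pa_deg B"
    using shear_generic(1)[OF c(1)] shear_generic(1)[OF c(2)]
    by (simp add: hom_mult degree_mult_eq)
  then have "pa_deg A + pa_deg B \<le> pa_deg (A * B)"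
    using degree_le_pa_deg[of "shear c (A * B)"] pa_deg_shear_le[of c "A * B"] by linarith
  then show ?thesis using pa_deg_mult_le[of A B] by linarith
qed

section \<open>A Bezout bound\<close>

lemma degree_det_le:
  fixes A :: "'a::comm_ring_1 poly mat" and r s :: "nat \<Rightarrow> int"
  assumes A: "A \<in> carrier_mat N N"
    and entry: "\<And>i j. i < N \<Longrightarrow> j < N \<Longrightarrow> A $$ (i, j) \<noteq> 0 \<Longrightarrow>
      int (degree (A $$ (i, j))) \<le> r i + s j"
    and total: "(\<Sum>i<N. r i + s i) \<le> int d"
  shows "degree (Determinant.det A) \<le> d"
proof -
  have "degree (signof \<sigma> * (\<Prod>i = 0..<N. A $$ (i, \<sigma> i))) \<le> d"
    if \<sigma>: "\<sigma> permutes {0..<N}" for \<sigma>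
  proof (cases "\<exists>i\<in>{0..<N}. A $$ (i, \<sigma> i) = 0")
    case True
    then have "(\<Prod>i = 0..<N. A $$ (i, \<sigma> i)) = 0" by (intro prod_zero) auto
    then show ?thesis by simp
  next
    case False
    have "int (degree (\<Prod>i = 0..<N. A $$ (i, \<sigma> i))) \<le> (\<Sum>i = 0..<N. int (degree (A $$ (i, \<sigma> i))))"
      using degree_prod_sum_le[of "{0..<N}" "\<lambda>i. A $$ (i, \<sigma> i)"]
      by (simp flip: of_nat_sum add: o_def)
    also have "\<dots> \<le> (\<Sum>i = 0..<N. r i + s (\<sigma> i))"
      by (rule sum_mono) (use False entry permutes_in_image[OF \<sigma>] in auto)
    also have "\<dots> = (\<Sum>i<N. r i + s i)"
      using sum.reindex_bij_betw[OF permutes_imp_bij[OF \<sigma>], of s]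
      by (simp add: sum.distrib atLeast0LessThan)
    finally have "degree (\<Prod>i = 0..<N. A $$ (i, \<sigma> i)) \<le> d"
      using total by linarith
    then show ?thesis
      using degree_mult_le[of "signof \<sigma>" "\<Prod>i = 0..<N. A $$ (i, \<sigma> i)"]
      by (simp add: degree_of_int)
  qed
  then show ?thesis
    unfolding det_def'[OF A] by (intro degree_sum_le) (auto simp: finite_permutations)
qed

text \<open>Entry \<open>(i, j)\<close> of the Sylvester matrix is the coefficient of \<open>y ^ (m + i - j)\<close> in \<open>p\<close>
  for \<open>i < n\<close> and of \<open>y ^ (i - j)\<close> in \<open>q\<close> otherwise, so its degree in \<open>x\<close> is at most
  \<open>j - i\<close>, resp. \<open>n + j - i\<close>.\<close>

lemma degree_resultant_le:
  fixes p q :: "complex poly poly"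
  assumes p: "degree p = m" "pa_deg p \<le> m" and q: "degree q = n" "pa_deg q \<le> n"
  shows "degree (resultant p q) \<le> m * n"
  unfolding resultant_def
proof (rule degree_det_le[where r = "\<lambda>i. if i < n then - int i else int n - int i" and s = int])
  show "sylvester_mat p q \<in> carrier_mat (m + n) (m + n)"
    using sylvester_carrier_mat[of p q] p q by simp
next
  fix i j assume ij: "i < m + n" "j < m + n" and nz: "sylvester_mat p q $$ (i, j) \<noteq> 0"
  note entry = sylvester_index_mat[of i p q j, unfolded p(1) q(1), OF ij]
  show "int (degree (sylvester_mat p q $$ (i, j))) \<le> (if i < n then - int i else int n - int i) + int j"
  proof (cases "i < n")
    case True
    with nz entry have "i \<le> j" "coeff p (m + i - j) \<noteq> 0" by (auto split: if_splits)
    with le_pa_deg[of p "m + i - j"] p(2) True entry show ?thesis by auto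
  next
    case False
    with nz entry have "j \<le> i" "coeff q (i - j) \<noteq> 0" by (auto split: if_splits)
    with le_pa_deg[of q "i - j"] q(2) False entry show ?thesis by auto
  qed
next
  have "(\<Sum>i<m + n. (if i < n then - int i else int n - int i) + int i)
      = (\<Sum>i<n + m. if i < n then 0 else int n)"
    by (rule sum.cong) auto
  also have "\<dots> = int (m * n)"
    by (induction m) auto
  finally show "(\<Sum>i<m + n. (if i < n then - int i else int n - int i) + int i) \<le> int (m * n)"
    by simp
qed

lemma poly_resultant_eq_0_if_common_root:
  fixes p q :: "complex poly poly"
  assumes "lead_coeff p = [:a:]" "a \<noteq> 0" "lead_coeff q = [:b:]" "b \<noteq> 0"
    and "poly2 p x y = 0" "poly2 q x y = 0"
  shows "poly (resultant p q) x = 0"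
proof -
  define p0 where "p0 = map_poly (\<lambda>r. poly r x) p"
  define q0 where "q0 = map_poly (\<lambda>r. poly r x) q"
  have lc: "coeff p0 (degree p) = a" "coeff q0 (degree q) = b"
    using assms(1,3) by (simp_all add: p0_def q0_def coeff_map_poly)
  have "degree p0 \<le> degree p" "degree q0 \<le> degree q"
    unfolding p0_def q0_def by (rule degree_map_poly_le)+
  moreover have "degree p \<le> degree p0" "degree q \<le> degree q0"
    using lc assms(2,4) by (auto intro: le_degree)
  ultimately have deg: "degree p0 = degree p" "degree q0 = degree q" by simp_all
  have "p0 \<noteq> 0" using lc assms(2) by auto
  have "poly (resultant p q) x = resultant p0 q0"
    unfolding p0_def q0_def by (rule poly_hom.resultant_map_poly[symmetric]) (use deg in \<open>simp_all add: p0_def q0_def\<close>)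
  moreover have "[:-y, 1:] dvd gcd p0 q0"
    using assms(5,6) by (simp add: poly_eq_0_iff_dvd poly2_def p0_def q0_def)
  then have "degree (gcd p0 q0) \<noteq> 0"
    using dvd_imp_degree_le[of "[:-y, 1:]" "gcd p0 q0"] \<open>p0 \<noteq> 0\<close> by fastforce
  ultimately show ?thesis by (simp add: resultant_0_gcd)
qed

lemma finite_non_injective_slopes:
  fixes S :: "('a::field \<times> 'a) set"
  assumes "finite S"
  shows "finite {c. \<not> inj_on (\<lambda>(x, y). x - c * y) S}"
proof (rule finite_subset)
  show "{c. \<not> inj_on (\<lambda>(x, y). x - c * y) S} \<subseteq> (\<lambda>((x1, y1), (x2, y2)). (x1 - x2) / (y1 - y2)) ` (S \<times> S)"
  proof
    fix c assume "c \<in> {c. \<not> inj_on (\<lambda>(x, y). x - c * y) S}"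
    then obtain x1 y1 x2 y2 where S: "(x1, y1) \<in> S" "(x2, y2) \<in> S"
      and "(x1, y1) \<noteq> (x2, y2)" and eq: "x1 - c * y1 = x2 - c * y2"
      unfolding inj_on_def by auto
    then have "y1 \<noteq> y2" by auto
    moreover have "c * (y1 - y2) = x1 - x2" using eq by (simp add: algebra_simps)
    ultimately have "c = (x1 - x2) / (y1 - y2)" by (simp add: eq_divide_eq)
    with S show "c \<in> (\<lambda>((x1, y1), (x2, y2)). (x1 - x2) / (y1 - y2)) ` (S \<times> S)"
      by force
  qed
qed (use assms in simp)

theorem card_common_zeros_le:
  fixes F G :: "complex poly poly"
  assumes "F \<noteq> 0" "G \<noteq> 0" "coprime F G" "finite S"
    and zeros: "\<And>x y. (x, y) \<in> S \<Longrightarrow> poly2 F x y = 0 \<and> poly2 G x y = 0"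
  shows "card S \<le> pa_deg F * pa_deg G"
proof -
  obtain c where inj: "inj_on (\<lambda>(x, y). x - c * y) S"
    and F: "poly (top_form (pa_deg F) F) c \<noteq> 0" and G: "poly (top_form (pa_deg G) G) c \<noteq> 0"
    using avoid_finite_and_roots[OF finite_non_injective_slopes[OF \<open>finite S\<close>]]
      top_form_nonzero assms(1,2) by blast
  define R where "R = resultant (shear c F) (shear c G)"
  have "coprime (shear c F) (shear c G)" by (rule coprime_shear[OF assms(3)])
  then have "R \<noteq> 0" by (simp add: R_def resultant_0_gcd coprime_iff_gcd_eq_1)
  have roots: "(\<lambda>(x, y). x - c * y) ` S \<subseteq> {t. poly R t = 0}"
  proof clarify
    fix x y assume "(x, y) \<in> S"
    then have "poly2 (shear c F) (x - c * y) y = 0" "poly2 (shear c G) (x - c * y) y = 0"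
      using zeros[of x y] by (simp_all add: poly2_shear)
    moreover have "lead_coeff (shear c F) = [:poly (top_form (pa_deg F) F) c:]"
      "lead_coeff (shear c G) = [:poly (top_form (pa_deg G) G) c:]"
      using shear_generic[OF F] shear_generic[OF G] by simp_all
    ultimately show "poly R (x - c * y) = 0"
      unfolding R_def using F G by (intro poly_resultant_eq_0_if_common_root)
  qed
  have "card S = card ((\<lambda>(x, y). x - c * y) ` S)"
    using card_image[OF inj] by simp
  also have "\<dots> \<le> card {t. poly R t = 0}"
    by (rule card_mono[OF poly_roots_finite[OF \<open>R \<noteq> 0\<close>] roots])
  also have "\<dots> \<le> degree R"
    by (rule card_poly_roots_bound[OF \<open>R \<noteq> 0\<close>])
  also have "\<dots> \<le> pa_deg F * pa_deg G"
    unfolding R_def using shear_generic(1)[OF F] shear_generic(1)[OF G] pa_deg_shear_le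
    by (intro degree_resultant_le) auto
  finally show ?thesis .
qed

section \<open>Conjugation\<close>

definition pa_cnj :: "complex poly poly \<Rightarrow> complex poly poly" where
  "pa_cnj P = (\<Sum>j\<le>degree P. \<Sum>k\<le>degree (coeff P j). monom (monom (cnj (coeff (coeff P j) k)) j) k)"

lemma poly2_pa_cnj: "poly2 (pa_cnj P) (cnj z) z = cnj (pa_eval P z)"
proof -
  have "cnj (pa_eval P z) = (\<Sum>j\<le>degree P. \<Sum>k\<le>degree (coeff P j).
      cnj (coeff (coeff P j) k) * cnj z ^ j * z ^ k)"
    unfolding pa_eval_def
    by (simp add: poly_altdef sum_distrib_left sum_distrib_right cnj_sum mult_ac)
  then show ?thesis by (simp add: pa_cnj_def poly2_sum poly2_monom_monom)
qed

lemma pa_deg_pa_cnj_le: "pa_deg (pa_cnj P) \<le> pa_deg P"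
  unfolding pa_cnj_def
proof (intro pa_deg_sum_le)
  fix j k assume "k \<in> {..degree (coeff P j)}"
  show "pa_deg (monom (monom (cnj (coeff (coeff P j) k)) j) k) \<le> pa_deg P"
  proof (cases "coeff P j = 0")
    case False
    have "pa_deg (monom (monom (cnj (coeff (coeff P j) k)) j) k) \<le> j + k"
      by (rule pa_deg_monom_monom_le)
    also have "\<dots> \<le> pa_deg P"
      using le_pa_deg[OF False] \<open>k \<in> {..degree (coeff P j)}\<close> by simp
    finally show ?thesis .
  qed simp
qed

lemma not_dvd_if_pa_deg_less:
  assumes "G \<noteq> 0" "pa_deg G < pa_deg P"
  shows "\<not> P dvd G"
proof
  assume "P dvd G"
  then obtain M where "G = P * M" by (elim dvdE)
  with assms pa_deg_mult[of P M] show False by auto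
qed

lemma cnj_multiple_if_dvd_pa_cnj:
  assumes "P dvd pa_cnj P" "pa_eval P z1 \<noteq> 0"
  shows "\<exists>u. \<forall>z. cnj (pa_eval P z) = u * pa_eval P z"
proof -
  from assms(1) obtain M where M: "pa_cnj P = P * M" by (elim dvdE)
  have "pa_cnj P \<noteq> 0" using poly2_pa_cnj[of P z1] assms(2) by auto
  then have "pa_deg P + pa_deg M \<le> pa_deg P"
    using M pa_deg_mult[of P M] pa_deg_pa_cnj_le[of P] by auto
  then obtain u where "M = [:[:u:]:]" using pa_deg_eq_0_iff[of M] by auto
  have "cnj (pa_eval P z) = u * pa_eval P z" for z
  proof -
    have "cnj (pa_eval P z) = poly2 (P * M) (cnj z) z"
      using M poly2_pa_cnj[of P z] by metis
    also have "\<dots> = pa_eval P z * u"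
      by (simp only: poly2_mult \<open>M = [:[:u:]:]\<close> poly2_const pa_eval_poly2)
    finally show ?thesis by simp
  qed
  then show ?thesis by blast
qed

lemma real_multiple_if_cnj_multiple:
  fixes f :: "'a \<Rightarrow> complex"
  assumes cnj: "\<And>z. cnj (f z) = u * f z" and "f z1 \<noteq> 0"
  obtains s where "s \<noteq> 0" "\<And>z. Im (s * f z) = 0"
proof -
  have "norm u = 1"
    using arg_cong[OF cnj[of z1], of norm] \<open>f z1 \<noteq> 0\<close> by (simp add: norm_mult)
  define s where "s = csqrt u"
  have "norm s = 1"
    using \<open>norm u = 1\<close> by (simp add: s_def)
  then have "s * cnj s = 1"
    using complex_norm_square[of s] by simp
  have cnj_s: "cnj (s * f z) = s * f z" for z
  proof -
    have "cnj (s * f z) = cnj s * (s\<^sup>2 * f z)" using cnj[of z] by (simp add: s_def)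
    also have "\<dots> = (s * cnj s) * (s * f z)" by (simp add: power2_eq_square algebra_simps)
    finally show ?thesis using \<open>s * cnj s = 1\<close> by simp
  qed
  have "Im (s * f z) = 0" for z
  proof -
    have "Im (cnj (s * f z)) = Im (s * f z)" by (simp only: cnj_s)
    then show ?thesis by (simp only: cnj.sel)
  qed
  moreover have "s \<noteq> 0" using \<open>norm s = 1\<close> by auto
  ultimately show ?thesis using that by blast
qed

lemma constant_sign_if_finite_zeros:
  fixes g :: "'a::euclidean_space \<Rightarrow> real"
  assumes "2 \<le> DIM('a)" "continuous_on UNIV g" "finite {z. g z = 0}"
  shows "(\<forall>z. 0 \<le> g z) \<or> (\<forall>z. g z \<le> 0)"
proof (rule ccontr)
  let ?Z = "{z. g z = 0}"
  assume "\<not> ?thesis"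
  then obtain a b where ab: "g a < 0" "0 < g b" by (auto simp: not_le)
  have "continuous_on (- ?Z) g"
    using assms(2) by (rule continuous_on_subset) simp
  moreover have "connected (- ?Z)"
    using assms(1,3)
    by (intro path_connected_imp_connected path_connected_complement_countable)
      (auto simp: countable_finite)
  ultimately have "connected (g ` (- ?Z))"
    by (rule connected_continuous_image)
  moreover have "g a \<in> g ` (- ?Z)" "g b \<in> g ` (- ?Z)"
    using ab by auto
  ultimately have "0 \<in> g ` (- ?Z)"
    using ab unfolding connected_iff_interval by (meson less_imp_le)
  then show False by auto
qed

lemma nonneg_multiple_if_real_multiple:
  fixes f :: "complex \<Rightarrow> complex"
  assumes cont: "continuous_on UNIV f" and fin: "finite {z. f z = 0}"
    and s: "s \<noteq> 0" "\<And>z. Im (s * f z) = 0"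
  obtains t where "t \<noteq> 0" "\<And>z. Im (t * f z) = 0" "\<And>z. 0 \<le> Re (t * f z)"
proof -
  have real_eq_0: "Im w = 0 \<Longrightarrow> Re w = 0 \<longleftrightarrow> w = 0" for w :: complex
    by (simp add: complex_eq_iff)
  have "Re (s * f z) = 0 \<longleftrightarrow> f z = 0" for z
    using real_eq_0[OF s(2)[of z]] s(1) by simp
  then have "{z. Re (s * f z) = 0} = {z. f z = 0}" by blast
  moreover have "continuous_on UNIV (\<lambda>z. Re (s * f z))"
    using cont by (intro continuous_intros)
  ultimately have "(\<forall>z. 0 \<le> Re (s * f z)) \<or> (\<forall>z. Re (s * f z) \<le> 0)"
    using constant_sign_if_finite_zeros[of "\<lambda>z. Re (s * f z)"] fin
    by (simp del: times_complex.sel)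
  then show ?thesis
  proof
    assume "\<forall>z. 0 \<le> Re (s * f z)"
    with s show ?thesis by (intro that[of s]) (auto simp del: times_complex.sel)
  next
    assume neg: "\<forall>z. Re (s * f z) \<le> 0"
    show ?thesis
    proof (rule that[of "- s"])
      fix z
      show "Im (- s * f z) = 0"
        using s(2)[of z] by (simp only: mult_minus_left uminus_complex.sel neg_equal_0_iff_equal)
      show "0 \<le> Re (- s * f z)"
        using neg[rule_format, of z] by (simp only: mult_minus_left uminus_complex.sel neg_0_le_iff_le)
    qed (use s in simp)
  qed
qed

lemma nonneg_real_multiple_if_dvd_pa_cnj:
  assumes "P dvd pa_cnj P" "finite (pa_zeros P)"
  obtains s where "s \<noteq> 0" "\<And>z. Im (s * pa_eval P z) = 0" "\<And>z. 0 \<le> Re (s * pa_eval P z)"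
proof -
  obtain z1 where "z1 \<notin> pa_zeros P"
    using ex_new_if_finite[OF infinite_UNIV_char_0 assms(2)] by blast
  then have z1: "pa_eval P z1 \<noteq> 0" by (simp add: pa_zeros_def)
  obtain u where "\<And>z. cnj (pa_eval P z) = u * pa_eval P z"
    using cnj_multiple_if_dvd_pa_cnj[OF assms(1) z1] by blast
  then obtain s where s: "s \<noteq> 0" "\<And>z. Im (s * pa_eval P z) = 0"
    using real_multiple_if_cnj_multiple z1 by metis
  have cont: "continuous_on UNIV (pa_eval P)"
    unfolding pa_eval_def by (intro continuous_intros)
  have fin: "finite {z. pa_eval P z = 0}"
    using assms(2) by (simp add: pa_zeros_def)
  show ?thesis
    by (rule nonneg_multiple_if_real_multiple[OF cont fin s]) (rule that)
qed

section \<open>Critical points\<close>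

lemma has_field_derivative_poly_line:
  fixes q :: "'a::real_normed_field poly"
  shows "((\<lambda>t. poly q (w + t * k)) has_field_derivative poly (pderiv q) w * k) (at 0)"
proof -
  have "((\<lambda>t. w + t * k) has_field_derivative k) (at 0)"
    by (auto intro!: derivative_eq_intros)
  from DERIV_chain2[OF poly_DERIV this] show ?thesis by simp
qed

lemma has_field_derivative_poly2_line:
  fixes P :: "'a::real_normed_field poly poly"
  shows "((\<lambda>t. poly2 P (w + t * k) (z + t * h)) has_field_derivative
      h * poly2 (pderiv P) w z + k * poly2 (map_poly pderiv P) w z) (at 0)"
proof (induction P)
  case (pCons a P)
  have "((\<lambda>t. z + t * h) has_field_derivative h) (at 0)"
    by (auto intro!: derivative_eq_intros)
  from DERIV_add[OF has_field_derivative_poly_line[of a w k] DERIV_mult[OF this pCons.IH]]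
  show ?case
    by (simp add: poly2_pCons pderiv_pCons Polynomial.map_poly_pCons algebra_simps)
qed simp

lemma field_derivative_eq_0_at_real_min:
  fixes f :: "complex \<Rightarrow> complex"
  assumes deriv: "(f has_field_derivative D) (at 0)"
    and real: "\<And>t. Im (f (of_real t)) = 0"
    and min: "\<And>t. Re (f 0) \<le> Re (f (of_real t))"
  shows "D = 0"
proof -
  have "((\<lambda>t. f (of_real t)) has_vector_derivative D) (at 0)"
    using deriv by (intro has_vector_derivative_real_field) simp
  then have re: "((\<lambda>t. Re (f (of_real t))) has_real_derivative Re D) (at 0)"
    and im: "((\<lambda>t. Im (f (of_real t))) has_real_derivative Im D) (at 0)"
    by (rule has_field_derivative_Re, rule has_field_derivative_Im)
  have "Re D = 0"
    using min by (intro DERIV_local_min[OF re, of 1]) auto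
  moreover have "((\<lambda>t. 0) has_real_derivative Im D) (at 0)"
    using im by (simp add: real)
  then have "Im D = 0"
    using DERIV_unique DERIV_const by blast
  ultimately show ?thesis by (simp add: complex_eq_iff)
qed

lemma partial_derivatives_vanish_at_min:
  fixes P :: "complex poly poly"
  assumes real: "\<And>z. Im (s * pa_eval P z) = 0" and nonneg: "\<And>z. 0 \<le> Re (s * pa_eval P z)"
    and "s \<noteq> 0" "pa_eval P z0 = 0"
  shows "poly2 (pderiv P) (cnj z0) z0 = 0 \<and> poly2 (map_poly pderiv P) (cnj z0) z0 = 0"
proof -
  define A where "A = poly2 (pderiv P) (cnj z0) z0"
  define B where "B = poly2 (map_poly pderiv P) (cnj z0) z0"
  have directional: "h * A + cnj h * B = 0" for h
  proof -
    let ?f = "\<lambda>t. s * poly2 P (cnj z0 + t * cnj h) (z0 + t * h)"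
    have on_line: "?f (of_real t) = s * pa_eval P (z0 + of_real t * h)" for t
      by (simp add: pa_eval_poly2)
    have "(?f has_field_derivative s * (h * A + cnj h * B)) (at 0)"
      unfolding A_def B_def by (intro DERIV_cmult has_field_derivative_poly2_line)
    moreover have "Im (?f (of_real t)) = 0" for t
      unfolding on_line by (rule real)
    moreover have "Re (?f 0) \<le> Re (?f (of_real t))" for t
    proof -
      have f0: "?f 0 = 0" using \<open>pa_eval P z0 = 0\<close> by (simp add: pa_eval_poly2)
      show ?thesis unfolding on_line f0 zero_complex.sel by (rule nonneg)
    qed
    ultimately have "s * (h * A + cnj h * B) = 0"
      by (rule field_derivative_eq_0_at_real_min)
    with \<open>s \<noteq> 0\<close> show ?thesis by simp
  qed
  have "A + B = 0" using directional[of 1] by simp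
  moreover have "\<i> * A - \<i> * B = 0" using directional[of \<i>] by simp
  ultimately have "A = 0" "B = 0" by (auto simp: algebra_simps)
  then show ?thesis by (simp add: A_def B_def)
qed

lemma pa_deg_pderiv_le: "pa_deg (pderiv P) \<le> pa_deg P - 1"
proof (rule pa_deg_leI)
  fix j assume nz: "coeff (pderiv P) j \<noteq> 0"
  have cj: "coeff (pderiv P) j = of_nat (Suc j) * coeff P (Suc j)"
    by (rule coeff_pderiv)
  with nz have "coeff P (Suc j) \<noteq> 0" by auto
  moreover have "degree (coeff (pderiv P) j) \<le> degree (coeff P (Suc j))"
    using degree_mult_le[of "of_nat (Suc j)" "coeff P (Suc j)"]
      degree_of_nat[of "Suc j", where 'a = complex] unfolding cj by linarith
  ultimately show "j + degree (coeff (pderiv P) j) \<le> pa_deg P - 1"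
    using le_pa_deg[of P "Suc j"] by linarith
qed

lemma pa_deg_map_poly_pderiv_le: "pa_deg (map_poly pderiv P) \<le> pa_deg P - 1"
proof (rule pa_deg_leI)
  fix j assume nz: "coeff (map_poly pderiv P) j \<noteq> 0"
  have cj: "coeff (map_poly pderiv P) j = pderiv (coeff P j)"
    by (simp add: coeff_map_poly)
  with nz have "coeff P j \<noteq> 0" "degree (coeff P j) \<noteq> 0"
    using pderiv_eq_0_iff by fastforce+
  then show "j + degree (coeff (map_poly pderiv P) j) \<le> pa_deg P - 1"
    unfolding cj using le_pa_deg[of P j] degree_pderiv[of "coeff P j"] by linarith
qed

lemma pa_deg_eq_0_if_derivatives_eq_0:
  assumes "pderiv P = 0" "map_poly pderiv P = 0"
  shows "pa_deg P = 0"
proof -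
  have "degree P = 0" using assms(1) pderiv_eq_0_iff by blast
  then have "P = [:coeff P 0:]" by (metis degree_0_id)
  moreover have "pderiv (coeff P 0) = 0"
    using arg_cong[OF assms(2), of "\<lambda>Q. coeff Q 0"] by (simp add: coeff_map_poly)
  then have "coeff P 0 = [:coeff (coeff P 0) 0:]"
    using pderiv_eq_0_iff by (metis degree_0_id)
  ultimately show ?thesis by (metis pa_deg_const)
qed

lemma card_pa_zeros_le_if_coprime:
  assumes "P \<noteq> 0" "G \<noteq> 0" "coprime P G" "finite (pa_zeros P)"
    and "\<And>z. z \<in> pa_zeros P \<Longrightarrow> poly2 G (cnj z) z = 0"
  shows "card (pa_zeros P) \<le> pa_deg P * pa_deg G"
proof -
  have "card (pa_zeros P) = card ((\<lambda>z. (cnj z, z)) ` pa_zeros P)"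
    by (rule card_image[symmetric]) (auto simp: inj_on_def)
  also have "\<dots> \<le> pa_deg P * pa_deg G"
    using assms by (intro card_common_zeros_le) (auto simp: pa_zeros_def pa_eval_poly2)
  finally show ?thesis .
qed

text \<open>A prime \<open>P\<close> is either coprime to \<open>pa_cnj P\<close>, which vanishes on the zeros of \<open>P\<close>, or it
  divides it; then a rotation \<open>s P\<close> is real and, its zero set being finite, of constant sign,
  so every zero of \<open>P\<close> is a critical point and a nonzero partial derivative takes the role
  of \<open>pa_cnj P\<close>.\<close>

lemma card_pa_zeros_le_square_if_prime:
  assumes "prime_elem P" "finite (pa_zeros P)"
  shows "card (pa_zeros P) \<le> (pa_deg P)\<^sup>2"
proof -
  have "P \<noteq> 0" "pa_deg P \<noteq> 0"
    using assms(1) is_unit_iff_pa_deg_eq_0[of P] by (auto simp: prime_elem_def)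
  obtain G where G: "G \<noteq> 0" "pa_deg G \<le> pa_deg P" "coprime P G"
    and zeros: "\<And>z. z \<in> pa_zeros P \<Longrightarrow> poly2 G (cnj z) z = 0"
  proof (cases "P dvd pa_cnj P")
    case False
    then have "pa_cnj P \<noteq> 0" by auto
    with False show ?thesis
      using prime_elem_imp_coprime[OF assms(1) False] pa_deg_pa_cnj_le poly2_pa_cnj
      by (intro that[of "pa_cnj P"]) (auto simp: pa_zeros_def)
  next
    case True
    obtain s where s: "s \<noteq> 0" "\<And>z. Im (s * pa_eval P z) = 0" "\<And>z. 0 \<le> Re (s * pa_eval P z)"
      using nonneg_real_multiple_if_dvd_pa_cnj[OF True assms(2)] by blast
    define G where "G = (if pderiv P \<noteq> 0 then pderiv P else map_poly pderiv P)"
    have "G \<noteq> 0"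
      using pa_deg_eq_0_if_derivatives_eq_0[of P] \<open>pa_deg P \<noteq> 0\<close> by (auto simp: G_def)
    moreover have "pa_deg G < pa_deg P"
      using pa_deg_pderiv_le[of P] pa_deg_map_poly_pderiv_le[of P] \<open>pa_deg P \<noteq> 0\<close>
      by (auto simp: G_def)
    moreover from calculation have "coprime P G"
      by (intro prime_elem_imp_coprime[OF assms(1)] not_dvd_if_pa_deg_less)
    moreover have "poly2 G (cnj z) z = 0" if "z \<in> pa_zeros P" for z
      using partial_derivatives_vanish_at_min[OF s(2,3,1), of z] that
      by (auto simp: G_def pa_zeros_def)
    ultimately show ?thesis by (intro that[of G]) auto
  qed
  have "card (pa_zeros P) \<le> pa_deg P * pa_deg G"
    by (rule card_pa_zeros_le_if_coprime[OF \<open>P \<noteq> 0\<close> G(1,3) assms(2) zeros])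
  also have "\<dots> \<le> pa_deg P * pa_deg P"
    using G(2) by simp
  finally show ?thesis by (simp add: power2_eq_square)
qed

lemma card_pa_zeros_mult_le: "card (pa_zeros (A * B)) \<le> card (pa_zeros A) + card (pa_zeros B)"
  unfolding pa_zeros_mult by (rule card_Un_le)

theorem card_pa_zeros_le_square:
  "finite (pa_zeros P) \<Longrightarrow> card (pa_zeros P) \<le> (pa_deg P)\<^sup>2"
proof (induction "pa_deg P" arbitrary: P rule: less_induct)
  case less
  have "P \<noteq> 0" using less.prems by (rule nonzero_if_finite_pa_zeros)
  show ?case
  proof (cases "is_unit P \<or> prime_elem P")
    case True
    then show ?thesis
    proof
      assume "is_unit P"
      then obtain a where "P = [:[:a:]:]" "a \<noteq> 0"
        using is_unit_iff_pa_deg_eq_0[OF \<open>P \<noteq> 0\<close>] pa_deg_eq_0_iff by fastforce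
      then have "pa_zeros P = {}" by (simp add: pa_zeros_def pa_eval_poly2)
      then show ?thesis by simp
    qed (rule card_pa_zeros_le_square_if_prime[OF _ less.prems])
  next
    case False
    then obtain A B where P: "P = A * B" and "\<not> is_unit A" "\<not> is_unit B"
      using \<open>P \<noteq> 0\<close> by (auto simp: prime_elem_iff_irreducible irreducible_def)
    moreover have "A \<noteq> 0" "B \<noteq> 0" using \<open>P \<noteq> 0\<close> P by auto
    ultimately have deg: "pa_deg A \<noteq> 0" "pa_deg B \<noteq> 0" "pa_deg P = pa_deg A + pa_deg B"
      using is_unit_iff_pa_deg_eq_0 pa_deg_mult by auto
    have "finite (pa_zeros A)" "finite (pa_zeros B)"
      using less.prems by (simp_all add: P pa_zeros_mult)
    then have "card (pa_zeros A) \<le> (pa_deg A)\<^sup>2" "card (pa_zeros B) \<le> (pa_deg B)\<^sup>2"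
      using deg by (auto intro: less.hyps)
    then have "card (pa_zeros P) \<le> (pa_deg A)\<^sup>2 + (pa_deg B)\<^sup>2"
      using card_pa_zeros_mult_le[of A B] less.prems P by simp
    also have "\<dots> \<le> (pa_deg P)\<^sup>2"
      unfolding deg(3) by (simp add: power2_sum)
    finally show ?thesis .
  qed
qed

lemma pa_deg_prod_list: "0 \<notin> set Ps \<Longrightarrow> pa_deg (prod_list Ps) = (\<Sum>Q\<leftarrow>Ps. pa_deg Q)"
  by (induction Ps) (auto simp: pa_deg_mult prod_list_zero_iff)

lemma card_pa_zeros_prod_list_le:
  "finite (pa_zeros (prod_list Ps)) \<Longrightarrow> card (pa_zeros (prod_list Ps)) \<le> (\<Sum>Q\<leftarrow>Ps. (pa_deg Q)\<^sup>2)"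
proof (induction Ps)
  case Nil
  have "pa_zeros 1 = {}" by (simp add: pa_zeros_def pa_eval_poly2)
  then show ?case by simp
next
  case (Cons Q Ps)
  then have "finite (pa_zeros Q)" "finite (pa_zeros (prod_list Ps))"
    by (simp_all add: pa_zeros_mult)
  with Cons show ?case
    using card_pa_zeros_mult_le[of Q "prod_list Ps"] card_pa_zeros_le_square[of Q] by simp
qed

lemma sum_list_squares_less_square:
  fixes xs :: "nat list"
  assumes "2 \<le> length xs" "\<forall>x\<in>set xs. 1 \<le> x"
  shows "(\<Sum>x\<leftarrow>xs. x\<^sup>2) < (sum_list xs)\<^sup>2"
proof -
  have le: "(\<Sum>x\<leftarrow>ys. x\<^sup>2) \<le> (sum_list ys)\<^sup>2" for ys :: "nat list"
    by (induction ys) (auto simp: power2_sum)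
  obtain a ys where xs: "xs = a # ys" using assms(1) by (cases xs) auto
  with assms have "1 \<le> a" "ys \<noteq> []" "\<forall>y\<in>set ys. 1 \<le> y" by auto
  then have "1 \<le> sum_list ys" by (cases ys) auto
  with \<open>1 \<le> a\<close> have "0 < 2 * a * sum_list ys" by simp
  moreover have "(sum_list xs)\<^sup>2 = a\<^sup>2 + (sum_list ys)\<^sup>2 + 2 * a * sum_list ys"
    unfolding xs by (simp add: power2_sum)
  moreover have "(\<Sum>x\<leftarrow>xs. x\<^sup>2) = a\<^sup>2 + (\<Sum>y\<leftarrow>ys. y\<^sup>2)"
    unfolding xs by simp
  ultimately show ?thesis using le[of ys] by linarith
qed

lemma sum_squares_pa_deg_less:
  assumes "prod_list Ps \<noteq> 0" "2 \<le> length Ps" "\<forall>Q\<in>set Ps. 1 \<le> pa_deg Q"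
  shows "(\<Sum>Q\<leftarrow>Ps. (pa_deg Q)\<^sup>2) < (pa_deg (prod_list Ps))\<^sup>2"
proof -
  have "pa_deg (prod_list Ps) = (\<Sum>Q\<leftarrow>Ps. pa_deg Q)"
    using assms(1) by (intro pa_deg_prod_list) (auto simp: prod_list_zero_iff)
  then show ?thesis
    using sum_list_squares_less_square[of "map pa_deg Ps"] assms(2,3) by (simp add: o_def)
qed

lemma card_pa_zeros_reducible_le:
  assumes "finite (pa_zeros (A * B))" "1 \<le> pa_deg A" "1 \<le> pa_deg B"
  shows "int (card (pa_zeros (A * B))) \<le> (int (pa_deg (A * B)))\<^sup>2 - 2 * int (pa_deg (A * B)) + 2"
proof -
  have "A * B \<noteq> 0" using assms(1) by (rule nonzero_if_finite_pa_zeros)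
  then have deg: "pa_deg (A * B) = pa_deg A + pa_deg B" by (simp add: pa_deg_mult)
  have "card (pa_zeros (A * B)) \<le> (pa_deg A)\<^sup>2 + (pa_deg B)\<^sup>2"
    using card_pa_zeros_prod_list_le[of "[A, B]"] assms(1) by simp
  then have "int (card (pa_zeros (A * B))) \<le> int ((pa_deg A)\<^sup>2 + (pa_deg B)\<^sup>2)"
    by (rule of_nat_mono)
  moreover have "0 \<le> (int (pa_deg A) - 1) * (int (pa_deg B) - 1)"
    using assms(2,3) by simp
  ultimately show ?thesis
    unfolding deg by (simp add: power2_eq_square algebra_simps)
qed

theorem theorem2p13:
  fixes P :: polyanalytic and n :: nat
  assumes "pa_deg P = n"
    and "finite (pa_zeros P)"
  shows "(\<forall>Ps :: polyanalytic list.
            length Ps \<ge> 2 \<and> (\<forall>Q\<in>set Ps. pa_deg Q \<ge> 1) \<and> P = prod_list Ps \<longrightarrow>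
              card (pa_zeros P) \<le> (\<Sum>Q\<leftarrow>Ps. (pa_deg Q)^2) \<and>
              (\<Sum>Q\<leftarrow>Ps. (pa_deg Q)^2) < n^2)
       \<and> (n \<ge> 2 \<and> int (card (pa_zeros P)) \<ge> int n^2 - 2 * int n + 3 \<longrightarrow> pa_irreducible P)"
proof -
  have "P \<noteq> 0" using assms(2) by (rule nonzero_if_finite_pa_zeros)
  have "card (pa_zeros P) \<le> (\<Sum>Q\<leftarrow>Ps. (pa_deg Q)^2) \<and> (\<Sum>Q\<leftarrow>Ps. (pa_deg Q)^2) < n^2"
    if "length Ps \<ge> 2" "\<forall>Q\<in>set Ps. pa_deg Q \<ge> 1" "P = prod_list Ps" for Ps
    using that assms \<open>P \<noteq> 0\<close> card_pa_zeros_prod_list_le[of Ps] sum_squares_pa_deg_less[of Ps]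
    by auto
  moreover have "\<not> pa_reducible P" if "int (card (pa_zeros P)) \<ge> int n^2 - 2 * int n + 3"
    using that assms card_pa_zeros_reducible_le unfolding pa_reducible_def by fastforce
  ultimately show ?thesis by (simp add: pa_irreducible_def)
qed

end
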